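(* Let $G$ be a simple connected graph with vertices $v_1,\dots,v_n$ and edges $e_1,\dots,e_q$, with reduced incidence matrix $A(G)=[x_{ij}]$. For a set $S=\{t_1<t_2<\dots<t_{n-1}\}\subseteq\{1,\dots,q\}$, the edges $\{e_{t_1},\dots,e_{t_{n-1}}\}$ form a spanning tree of $G$ if and only if there is exactly one nonzero monomial of $A(G)$ with content $S$. Consequently, sending $S$ to the edge set $\{e_t : t\in S\}$ gives a one-to-one correspondence between the contents of uniquely occurring nonzero monomials of $A(G)$ and the (labeled) spanning trees of $G$.
   Context: The reduced incidence matrix $A(G)$ is the $(n-1)\times q$ matrix with $x_{ij}=1$ if $v_i$ is an endpoint of $e_j$ and $x_{ij}=0$ otherwise ($1\le i\le n-1$; the row of $v_n$ is deleted). A nonzero monomial of $A(G)$ is a product $x_{1j_1}x_{2j_2}\cdots x_{(n-1)j_{n-1}}$ with $j_1,\dots,j_{n-1}$ pairwise distinct column indices and every factor equal to $1$; its content (second index set) is $\{j_1,\dots,j_{n-1}\}$. A nonzero monomial is uniquely occurring if no other nonzero monomial has the same content. *)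

theory Defs
  imports Main "HOL-Library.FuncSet"
begin

definition simple_graph :: "nat \<Rightarrow> nat \<Rightarrow> (nat \<Rightarrow> nat set) \<Rightarrow> bool" where
  "simple_graph n q e \<longleftrightarrow>
     (\<forall>j\<in>{1..q}. e j \<subseteq> {1..n} \<and> card (e j) = 2) \<and> inj_on e {1..q}"

definition adj :: "nat set set \<Rightarrow> nat \<Rightarrow> nat \<Rightarrow> bool" where
  "adj T u v \<longleftrightarrow> {u, v} \<in> T \<and> u \<noteq> v"

definition connected_on :: "nat \<Rightarrow> nat set set \<Rightarrow> bool" where
  "connected_on n T \<longleftrightarrow> (\<forall>u\<in>{1..n}. \<forall>v\<in>{1..n}. (adj T)\<^sup>*\<^sup>* u v)"

definition has_cycle :: "nat set set \<Rightarrow> bool" where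
  "has_cycle T \<longleftrightarrow> (\<exists>ws. length ws \<ge> 3 \<and> distinct ws \<and>
       (\<forall>i < length ws. {ws ! i, ws ! ((i + 1) mod length ws)} \<in> T))"

definition spanning_tree :: "nat \<Rightarrow> nat \<Rightarrow> (nat \<Rightarrow> nat set) \<Rightarrow> nat set set \<Rightarrow> bool" where
  "spanning_tree n q e T \<longleftrightarrow> T \<subseteq> e ` {1..q} \<and> connected_on n T \<and> \<not> has_cycle T"

(* entry x_{ij} of the reduced incidence matrix (1 <= i <= n-1, 1 <= j <= q) *)
definition inc_entry :: "(nat \<Rightarrow> nat set) \<Rightarrow> nat \<Rightarrow> nat \<Rightarrow> nat" where
  "inc_entry e i j = (if i \<in> e j then 1 else 0)"

(* a nonzero monomial x_{1 j_1} ... x_{(n-1) j_{n-1}} is represented by the map i \<mapsto> j_i *)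
definition nonzero_monomial :: "nat \<Rightarrow> nat \<Rightarrow> (nat \<Rightarrow> nat set) \<Rightarrow> (nat \<Rightarrow> nat) \<Rightarrow> bool" where
  "nonzero_monomial n q e f \<longleftrightarrow>
     f \<in> {1..n-1} \<rightarrow>\<^sub>E {1..q} \<and> inj_on f {1..n-1} \<and>
     (\<forall>i\<in>{1..n-1}. inc_entry e i (f i) = 1)"

definition content :: "nat \<Rightarrow> (nat \<Rightarrow> nat) \<Rightarrow> nat set" where
  "content n f = f ` {1..n-1}"

definition uniquely_occurring :: "nat \<Rightarrow> nat \<Rightarrow> (nat \<Rightarrow> nat set) \<Rightarrow> (nat \<Rightarrow> nat) \<Rightarrow> bool" where
  "uniquely_occurring n q e f \<longleftrightarrow> nonzero_monomial n q e f \<and>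
     (\<forall>g. nonzero_monomial n q e g \<and> content n g = content n f \<longrightarrow> g = f)"

end

theory Submission
  imports Defs "HOL-Combinatorics.Permutations"
begin

text \<open>
  A nonzero monomial \<open>f\<close> gives every vertex \<open>v \<noteq> v\<^sub>n\<close> its own incident edge \<open>e (f v)\<close>.
  Call a nonempty set of such vertices closed if the edges of its vertices stay inside it.
  On a closed set, "go to the other endpoint of your edge" has a cycle; this is a cycle of
  the content, and passing every edge of it to the next vertex gives a second monomial with
  the same content. Conversely, two monomials with the same content differ on a closed set,
  the vertices not connected to \<open>v\<^sub>n\<close> form a closed set, and by counting so do the
  vertices of a cycle in the content. Hence a monomial occurs uniquely iff its content is
  acyclic iff it is a spanning tree. Finally, a spanning tree is the content of a monomial
  obtained by orienting it towards \<open>v\<^sub>n\<close>: a further tree edge \<open>{a, b}\<close> would, after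
  orienting towards \<open>a\<close> and giving \<open>a\<close> that edge, leave every vertex with its own edge,
  which forces a cycle.
\<close>

lemma symp_adj: "symp (adj T)"
  unfolding adj_def by (auto intro: sympI simp: insert_commute)

lemma connected_on_iff_rooted:
  assumes "r \<in> {1..n}"
  shows "connected_on n T \<longleftrightarrow> (\<forall>v\<in>{1..n}. (adj T)\<^sup>*\<^sup>* v r)"
proof
  assume rooted: "\<forall>v\<in>{1..n}. (adj T)\<^sup>*\<^sup>* v r"
  have "(adj T)\<^sup>*\<^sup>* u v" if "u \<in> {1..n}" "v \<in> {1..n}" for u v
    using rooted that sympD[OF symp_rtranclp[OF symp_adj]] rtranclp_trans by metis
  then show "connected_on n T" unfolding connected_on_def by blast
qed (use assms in \<open>auto simp: connected_on_def\<close>)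

lemma has_cycle_mono: "T \<subseteq> T' \<Longrightarrow> has_cycle T \<Longrightarrow> has_cycle T'"
  unfolding has_cycle_def by blast

definition other_end :: "'a set \<Rightarrow> 'a \<Rightarrow> 'a" where
  "other_end E v = the_elem (E - {v})"

lemma other_end:
  assumes "card E = 2" "v \<in> E"
  shows "E = {v, other_end E v}" and "other_end E v \<noteq> v"
proof -
  have "card (E - {v}) = 1" using assms by simp
  then obtain u where u: "E - {v} = {u}" by (rule card_1_singletonE)
  then have "other_end E v = u" by (simp add: other_end_def)
  then show "E = {v, other_end E v}" "other_end E v \<noteq> v" using u assms(2) by auto
qed

definition orbit_cycle :: "('a \<Rightarrow> 'a) \<Rightarrow> 'a list \<Rightarrow> bool" where
  "orbit_cycle \<psi> ws \<longleftrightarrow> 3 \<le> length ws \<and> distinct ws \<and>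
     (\<forall>i<length ws. \<psi> (ws ! i) = ws ! ((i + 1) mod length ws))"

lemma funpow_first_repetition:
  assumes "finite D" "x \<in> D" "f ` D \<subseteq> D"
  obtains i j where "i < j" "(f ^^ i) x = (f ^^ j) x" "inj_on (\<lambda>k. (f ^^ k) x) {..<j}"
proof -
  define s where "s k = (f ^^ k) x" for k
  have "s k \<in> D" for k by (induction k) (use assms(2,3) in \<open>auto simp: s_def\<close>)
  then have "\<not> inj s" using inj_on_finite[of s UNIV D] assms(1) by auto
  then have repeat: "\<exists>j. \<exists>i<j. s i = s j" unfolding inj_def by (metis linorder_neq_iff)
  define j where "j = (LEAST j. \<exists>i<j. s i = s j)"
  obtain i where "i < j" "s i = s j"
    using LeastI_ex[OF repeat] unfolding j_def[symmetric] by blast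
  moreover have "s a \<noteq> s b" if "a < b" "b < j" for a b
    using not_less_Least[of b "\<lambda>j. \<exists>i<j. s i = s j"] that unfolding j_def by blast
  then have "inj_on s {..<j}" unfolding inj_on_def by (metis lessThan_iff linorder_neq_iff)
  ultimately show thesis using that unfolding s_def[abs_def] by blast
qed

lemma orbit_cycle_exists:
  assumes "finite D" "x \<in> D" "\<psi> ` D \<subseteq> D"
    and no_fix: "\<forall>y\<in>D. \<psi> y \<noteq> y" and no_swap: "\<forall>y\<in>D. \<psi> (\<psi> y) \<noteq> y"
  shows "\<exists>ws. orbit_cycle \<psi> ws \<and> set ws \<subseteq> D"
proof -
  obtain i j where ij: "i < j" "(\<psi> ^^ i) x = (\<psi> ^^ j) x"
    and inj: "inj_on (\<lambda>k. (\<psi> ^^ k) x) {..<j}"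
    using funpow_first_repetition[OF assms(1-3)] .
  have orbit_in_D: "(\<psi> ^^ k) x \<in> D" for k by (induction k) (use assms(2,3) in auto)
  define ws where "ws = map (\<lambda>k. (\<psi> ^^ k) x) [i..<j]"
  have len: "length ws = j - i" and nth: "\<And>k. k < j - i \<Longrightarrow> ws ! k = (\<psi> ^^ (i + k)) x"
    by (simp_all add: ws_def)
  have "distinct ws"
    unfolding ws_def distinct_map using inj by (auto intro: inj_on_subset)
  moreover have "j - i \<ge> 3"
  proof -
    have "j \<noteq> Suc i" using ij no_fix orbit_in_D by (metis funpow.simps(2) o_apply)
    moreover have "j \<noteq> Suc (Suc i)" using ij no_swap orbit_in_D by (metis funpow.simps(2) o_apply)
    ultimately show ?thesis using ij(1) by linarith
  qed
  moreover have "\<psi> (ws ! k) = ws ! ((k + 1) mod (j - i))" if "k < j - i" for k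
  proof (cases "k + 1 < j - i")
    case True
    then show ?thesis using that nth by simp
  next
    case False
    then have "k + 1 = j - i" "Suc (i + k) = j" using that ij(1) by auto
    then have "\<psi> (ws ! k) = (\<psi> ^^ i) x" using that nth ij(2) by (metis funpow.simps(2) o_apply)
    then show ?thesis using \<open>k + 1 = j - i\<close> nth[of 0] by simp
  qed
  ultimately have "orbit_cycle \<psi> ws" unfolding orbit_cycle_def len by blast
  moreover have "set ws \<subseteq> D" using orbit_in_D by (auto simp: ws_def)
  ultimately show ?thesis by blast
qed

lemma orbit_cycle_has_cycle:
  assumes "orbit_cycle \<psi> ws" "\<forall>x\<in>set ws. {x, \<psi> x} \<in> T"
  shows "has_cycle T"
  unfolding has_cycle_def
proof (intro exI conjI allI impI)
  fix i assume "i < length ws"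
  then show "{ws ! i, ws ! ((i + 1) mod length ws)} \<in> T"
    using assms nth_mem unfolding orbit_cycle_def by metis
qed (use assms in \<open>auto simp: orbit_cycle_def\<close>)

lemma orbit_cycle_image:
  assumes "orbit_cycle \<psi> ws"
  shows "\<psi> ` set ws = set ws"
proof -
  define L where "L = length ws"
  have L: "0 < L" and succ: "\<And>i. i < L \<Longrightarrow> \<psi> (ws ! i) = ws ! ((i + 1) mod L)"
    using assms by (auto simp: orbit_cycle_def L_def)
  have "\<psi> (ws ! i) \<in> set ws" if "i < L" for i
    using succ[OF that] mod_less_divisor[OF L] by (simp add: L_def)
  moreover have "ws ! k \<in> \<psi> ` set ws" if "k < L" for k
  proof -
    define p where "p = (if k = 0 then L - 1 else k - 1)"
    have "p < L" using L that by (auto simp: p_def)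
    moreover have "(p + 1) mod L = k" using L that by (auto simp: p_def)
    ultimately show ?thesis using succ by (metis L_def image_eqI nth_mem)
  qed
  ultimately show ?thesis by (auto simp: in_set_conv_nth L_def)
qed

lemma orbit_cycle_predecessor:
  assumes "orbit_cycle \<psi> ws"
  obtains \<sigma> where "\<sigma> permutes set ws" "\<And>v. v \<in> set ws \<Longrightarrow> \<psi> (\<sigma> v) = v"
proof -
  let ?W = "set ws"
  have \<psi>W: "\<psi> ` ?W = ?W" using assms by (rule orbit_cycle_image)
  then have "bij_betw \<psi> ?W ?W" by (simp add: bij_betw_def eq_card_imp_inj_on)
  then have bij: "bij_betw (inv_into ?W \<psi>) ?W ?W" by (rule bij_betw_inv_into)
  define \<sigma> where "\<sigma> v = (if v \<in> ?W then inv_into ?W \<psi> v else v)" for v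
  have "bij_betw \<sigma> ?W ?W" using bij_betw_cong[of ?W \<sigma> "inv_into ?W \<psi>" ?W] bij by (simp add: \<sigma>_def)
  then have "\<sigma> permutes ?W" by (rule bij_imp_permutes) (simp add: \<sigma>_def)
  moreover have "\<psi> (\<sigma> v) = v" if "v \<in> ?W" for v using that \<psi>W by (simp add: \<sigma>_def f_inv_into_f)
  ultimately show thesis using that by blast
qed

lemma injective_edge_choice_orbit_cycle:
  fixes E :: "'a \<Rightarrow> 'a set"
  assumes "finite D" "D \<noteq> {}" "inj_on E D"
    and E: "\<And>v. v \<in> D \<Longrightarrow> v \<in> E v \<and> card (E v) = 2 \<and> E v \<subseteq> D"
  shows "\<exists>ws. orbit_cycle (\<lambda>v. other_end (E v) v) ws \<and> set ws \<subseteq> D"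
proof -
  define \<psi> where "\<psi> v = other_end (E v) v" for v
  have edge: "E v = {v, \<psi> v}" "\<psi> v \<noteq> v" "\<psi> v \<in> D" if "v \<in> D" for v
    using other_end[of "E v" v] E[OF that] by (auto simp: \<psi>_def)
  have "\<psi> (\<psi> v) \<noteq> v" if "v \<in> D" for v
  proof
    assume "\<psi> (\<psi> v) = v"
    then have "E (\<psi> v) = E v" using edge[OF that] edge[OF edge(3)[OF that]] by (simp add: insert_commute)
    then have "\<psi> v = v" using inj_onD[OF assms(3)] edge(3)[OF that] that by blast
    then show False using edge(2)[OF that] by simp
  qed
  moreover obtain x where "x \<in> D" using assms(2) by blast
  moreover have "\<psi> ` D \<subseteq> D" "\<forall>y\<in>D. \<psi> y \<noteq> y" using edge by auto
  ultimately obtain ws where "orbit_cycle \<psi> ws" "set ws \<subseteq> D"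
    using orbit_cycle_exists[OF assms(1)] by blast
  then show ?thesis unfolding \<psi>_def[abs_def] by blast
qed

corollary injective_edge_choice_has_cycle:
  fixes E :: "nat \<Rightarrow> nat set"
  assumes "finite D" "D \<noteq> {}" "inj_on E D"
    and E: "\<And>v. v \<in> D \<Longrightarrow> v \<in> E v \<and> card (E v) = 2 \<and> E v \<subseteq> D"
  shows "has_cycle (E ` D)"
proof -
  obtain ws where ws: "orbit_cycle (\<lambda>v. other_end (E v) v) ws" "set ws \<subseteq> D"
    using injective_edge_choice_orbit_cycle[OF assms] by blast
  have "{x, other_end (E x) x} \<in> E ` D" if "x \<in> set ws" for x
    using other_end(1)[of "E x" x] E ws(2) that by force
  then show ?thesis using orbit_cycle_has_cycle[OF ws(1)] by blast
qed

lemma descending_neighbour_exists: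
  assumes "\<forall>v\<in>V. (adj T)\<^sup>*\<^sup>* v r"
  obtains \<phi> and d :: "nat \<Rightarrow> nat" where "\<forall>v\<in>V - {r}. adj T v (\<phi> v) \<and> d (\<phi> v) < d v"
proof -
  define d where "d v = (LEAST k. (adj T ^^ k) v r)" for v
  have "\<exists>u. adj T v u \<and> d u < d v" if v: "v \<in> V - {r}" for v
  proof -
    have "\<exists>k. (adj T ^^ k) v r" using assms v rtranclp_power by (metis DiffD1)
    then have walk: "(adj T ^^ d v) v r" unfolding d_def by (rule LeastI_ex)
    then obtain m where m: "d v = Suc m" using v by (cases "d v") auto
    then obtain u where u: "adj T v u" "(adj T ^^ m) u r" using walk relpowp_Suc_D2 by metis
    then have "d u \<le> m" unfolding d_def by (simp add: Least_le)
    then show ?thesis using u m by auto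
  qed
  then show ?thesis using that by metis
qed

lemma orientation_towards_root:
  assumes "\<forall>v\<in>V. (adj (e ` S))\<^sup>*\<^sup>* v r"
  obtains g where "inj_on g (V - {r})" "g ` (V - {r}) \<subseteq> S" "\<forall>v\<in>V - {r}. v \<in> e (g v)"
proof -
  obtain \<phi> and d :: "nat \<Rightarrow> nat" where \<phi>: "\<forall>v\<in>V - {r}. adj (e ` S) v (\<phi> v) \<and> d (\<phi> v) < d v"
    using descending_neighbour_exists[OF assms] by blast
  then have "\<forall>v\<in>V - {r}. \<exists>j\<in>S. e j = {v, \<phi> v}" unfolding adj_def by (metis imageE)
  then obtain g where g: "\<forall>v\<in>V - {r}. g v \<in> S \<and> e (g v) = {v, \<phi> v}" by metis
  have "inj_on g (V - {r})"
  proof (rule inj_onI, rule ccontr)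
    fix v w assume v: "v \<in> V - {r}" and w: "w \<in> V - {r}" and "g v = g w" "v \<noteq> w"
    then have "{v, \<phi> v} = {w, \<phi> w}" using g by metis
    then have "\<phi> w = v" "\<phi> v = w" using \<open>v \<noteq> w\<close> by (auto simp: doubleton_eq_iff)
    moreover have "d (\<phi> v) < d v" "d (\<phi> w) < d w" using \<phi> v w by auto
    ultimately show False by simp
  qed
  then show ?thesis using g that by blast
qed

lemma nonzero_monomialD:
  assumes "nonzero_monomial n q e f" "v \<in> {1..n-1}"
  shows "f v \<in> {1..q}" and "v \<in> e (f v)"
  using assms unfolding nonzero_monomial_def inc_entry_def by (auto split: if_splits)

lemma nonzero_monomial_inj: "nonzero_monomial n q e f \<Longrightarrow> inj_on f {1..n-1}"
  unfolding nonzero_monomial_def by blast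

lemma nonzero_monomial_edge:
  assumes "simple_graph n q e" "nonzero_monomial n q e f" "v \<in> {1..n-1}"
  shows "card (e (f v)) = 2" and "e (f v) \<subseteq> {1..n}"
  using assms nonzero_monomialD(1) unfolding simple_graph_def by blast+

lemma nonzero_monomial_inj_edge:
  assumes "simple_graph n q e" "nonzero_monomial n q e f"
  shows "inj_on (e \<circ> f) {1..n-1}"
proof (rule comp_inj_on)
  show "inj_on f {1..n-1}" using assms(2) by (rule nonzero_monomial_inj)
  have "f ` {1..n-1} \<subseteq> {1..q}" using nonzero_monomialD(1)[OF assms(2)] by blast
  then show "inj_on e (f ` {1..n-1})"
    using assms(1) inj_on_subset unfolding simple_graph_def by blast
qed

lemma content_subset: "nonzero_monomial n q e f \<Longrightarrow> content n f \<subseteq> {1..q}"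
  using nonzero_monomialD(1) unfolding content_def by blast

lemma card_content:
  assumes "nonzero_monomial n q e f"
  shows "card (content n f) = n - 1"
proof -
  have "card (f ` {1..n-1}) = card {1..n-1}" using card_image[OF nonzero_monomial_inj[OF assms]] .
  then show ?thesis by (simp add: content_def)
qed

lemma nonzero_monomial_exists:
  assumes "S \<subseteq> {1..q}" "\<forall>v\<in>{1..n}. (adj (e ` S))\<^sup>*\<^sup>* v n"
  obtains f where "nonzero_monomial n q e f" "content n f \<subseteq> S"
proof -
  have V: "{1..n} - {n} = {1..n-1}" by auto
  obtain g where g: "inj_on g {1..n-1}" "g ` {1..n-1} \<subseteq> S" "\<forall>v\<in>{1..n-1}. v \<in> e (g v)"
    using orientation_towards_root[OF assms(2)] unfolding V by blast
  have "nonzero_monomial n q e (restrict g {1..n-1})"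
    unfolding nonzero_monomial_def inc_entry_def using g assms(1) by (auto simp: inj_on_def)
  moreover have "content n (restrict g {1..n-1}) \<subseteq> S" using g(2) by (simp add: content_def)
  ultimately show thesis by (rule that)
qed

lemma nonzero_monomial_comp_permutes:
  assumes f: "nonzero_monomial n q e f" and \<sigma>: "\<sigma> permutes {1..n-1}"
    and incident: "\<forall>v\<in>{1..n-1}. v \<in> e (f (\<sigma> v))"
  shows "nonzero_monomial n q e (f \<circ> \<sigma>)" and "content n (f \<circ> \<sigma>) = content n f"
proof -
  show "content n (f \<circ> \<sigma>) = content n f"
    unfolding content_def image_comp[symmetric] permutes_image[OF \<sigma>] ..
  have "f (\<sigma> v) \<in> {1..q}" if "v \<in> {1..n-1}" for v
    using nonzero_monomialD(1)[OF f] permutes_in_image[OF \<sigma>] that by blast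
  moreover have "f (\<sigma> v) = undefined" if "v \<notin> {1..n-1}" for v
    using f permutes_not_in[OF \<sigma> that] that by (simp add: nonzero_monomial_def PiE_def extensional_def)
  ultimately have "f \<circ> \<sigma> \<in> {1..n-1} \<rightarrow>\<^sub>E {1..q}" by (simp add: PiE_iff extensional_def)
  moreover have "inj_on (f \<circ> \<sigma>) {1..n-1}"
  proof (rule comp_inj_on)
    show "inj_on \<sigma> {1..n-1}" using permutes_inj_on[OF \<sigma>] .
    show "inj_on f (\<sigma> ` {1..n-1})"
      unfolding permutes_image[OF \<sigma>] by (rule nonzero_monomial_inj[OF f])
  qed
  ultimately show "nonzero_monomial n q e (f \<circ> \<sigma>)"
    using incident unfolding nonzero_monomial_def inc_entry_def by simp
qed

definition closed_vertex_set :: "nat \<Rightarrow> (nat \<Rightarrow> nat set) \<Rightarrow> (nat \<Rightarrow> nat) \<Rightarrow> nat set \<Rightarrow> bool" where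
  "closed_vertex_set n e f D \<longleftrightarrow> D \<noteq> {} \<and> D \<subseteq> {1..n-1} \<and> (\<forall>v\<in>D. e (f v) \<subseteq> D)"

lemma closed_vertex_set_orbit_cycle:
  assumes "simple_graph n q e" "nonzero_monomial n q e f" "closed_vertex_set n e f D"
  shows "\<exists>ws. orbit_cycle (\<lambda>v. other_end (e (f v)) v) ws \<and> set ws \<subseteq> D"
proof -
  have D: "D \<noteq> {}" "D \<subseteq> {1..n-1}" "\<forall>v\<in>D. e (f v) \<subseteq> D"
    using assms(3) by (auto simp: closed_vertex_set_def)
  have "finite D" using D(2) finite_subset by blast
  moreover have "inj_on (e \<circ> f) D"
    using nonzero_monomial_inj_edge[OF assms(1,2)] D(2) by (rule inj_on_subset)
  moreover have "v \<in> (e \<circ> f) v \<and> card ((e \<circ> f) v) = 2 \<and> (e \<circ> f) v \<subseteq> D" if "v \<in> D" for v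
    using nonzero_monomialD(2)[OF assms(2)] nonzero_monomial_edge(1)[OF assms(1,2)] D that by auto
  ultimately show ?thesis using injective_edge_choice_orbit_cycle[OF _ D(1), of "e \<circ> f"] by simp
qed

lemma closed_vertex_set_has_cycle:
  assumes "simple_graph n q e" "nonzero_monomial n q e f" "closed_vertex_set n e f D"
  shows "has_cycle (e ` content n f)"
proof -
  obtain ws where ws: "orbit_cycle (\<lambda>v. other_end (e (f v)) v) ws" "set ws \<subseteq> D"
    using closed_vertex_set_orbit_cycle[OF assms] by blast
  have "{x, other_end (e (f x)) x} \<in> e ` content n f" if "x \<in> set ws" for x
  proof -
    have x: "x \<in> {1..n-1}" using that ws(2) assms(3) by (auto simp: closed_vertex_set_def)
    then have "{x, other_end (e (f x)) x} = e (f x)"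
      using other_end(1) nonzero_monomialD(2)[OF assms(2)] nonzero_monomial_edge(1)[OF assms(1,2)]
      by metis
    then show ?thesis using x by (simp add: content_def)
  qed
  then show ?thesis using orbit_cycle_has_cycle[OF ws(1)] by blast
qed

lemma closed_vertex_set_reorientation:
  assumes sg: "simple_graph n q e" and f: "nonzero_monomial n q e f"
    and D: "closed_vertex_set n e f D"
  obtains g where "nonzero_monomial n q e g" "content n g = content n f" "g \<noteq> f"
proof -
  define \<psi> where "\<psi> v = other_end (e (f v)) v" for v
  obtain ws where ws: "orbit_cycle \<psi> ws" "set ws \<subseteq> D"
    using closed_vertex_set_orbit_cycle[OF assms] unfolding \<psi>_def[abs_def] by blast
  define W where "W = set ws"
  have W: "W \<subseteq> {1..n-1}" using ws(2) D by (auto simp: closed_vertex_set_def W_def)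
  have edge: "e (f v) = {v, \<psi> v}" "\<psi> v \<noteq> v" if "v \<in> {1..n-1}" for v
    using other_end[OF nonzero_monomial_edge(1)[OF sg f that] nonzero_monomialD(2)[OF f that]]
    by (simp_all add: \<psi>_def)
  obtain \<sigma> where \<sigma>W: "\<sigma> permutes W" and \<psi>\<sigma>: "\<And>v. v \<in> W \<Longrightarrow> \<psi> (\<sigma> v) = v"
    using orbit_cycle_predecessor[OF ws(1)] unfolding W_def by blast
  have \<sigma>: "\<sigma> permutes {1..n-1}" using \<sigma>W W by (rule permutes_subset)
  \<comment> \<open>every vertex of the cycle takes over the edge of its predecessor\<close>
  have incident: "\<forall>v\<in>{1..n-1}. v \<in> e (f (\<sigma> v))"
  proof
    fix v assume v: "v \<in> {1..n-1}"
    show "v \<in> e (f (\<sigma> v))"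
    proof (cases "v \<in> W")
      case True
      then have "e (f (\<sigma> v)) = {\<sigma> v, v}"
        using edge(1) permutes_in_image[OF \<sigma>W] \<psi>\<sigma> W by (metis subsetD)
      then show ?thesis by simp
    next
      case False
      then show ?thesis using v nonzero_monomialD(2)[OF f] permutes_not_in[OF \<sigma>W] by simp
    qed
  qed
  obtain w where w: "w \<in> W" using ws(1) by (cases ws) (auto simp: orbit_cycle_def W_def)
  have "\<sigma> w \<in> W" using permutes_in_image[OF \<sigma>W] w by simp
  then have "\<sigma> w \<noteq> w" using edge(2) \<psi>\<sigma> W w by (metis subsetD)
  then have "(f \<circ> \<sigma>) w \<noteq> f w"
    using inj_onD[OF nonzero_monomial_inj[OF f]] \<open>\<sigma> w \<in> W\<close> W w by (metis comp_apply subsetD)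
  then have "f \<circ> \<sigma> \<noteq> f" by metis
  then show thesis using that nonzero_monomial_comp_permutes[OF f \<sigma> incident] by blast
qed

lemma distinct_monomials_closed_vertex_set:
  assumes sg: "simple_graph n q e" and f: "nonzero_monomial n q e f"
    and g: "nonzero_monomial n q e g" and same: "content n g = content n f" and "g \<noteq> f"
  shows "closed_vertex_set n e f {v \<in> {1..n-1}. f v \<noteq> g v}"
proof -
  let ?D = "{v \<in> {1..n-1}. f v \<noteq> g v}"
  have "?D \<noteq> {}"
  proof
    assume "?D = {}"
    then have "g v = f v" if "v \<in> {1..n-1}" for v using that by auto
    moreover have "g \<in> {1..n-1} \<rightarrow>\<^sub>E {1..q}" "f \<in> {1..n-1} \<rightarrow>\<^sub>E {1..q}"
      using f g by (simp_all add: nonzero_monomial_def)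
    ultimately have "g = f" by (metis PiE_ext)
    with \<open>g \<noteq> f\<close> show False ..
  qed
  moreover have "e (f v) \<subseteq> ?D" if v: "v \<in> ?D" for v
  proof -
    have "f v \<in> g ` {1..n-1}" using same v by (auto simp: content_def)
    then obtain w where w: "w \<in> {1..n-1}" "g w = f v" by (metis imageE)
    have "w \<noteq> v" using w v by auto
    have "card (e (f v)) = 2" "v \<in> e (f v)" "w \<in> e (f v)"
      using nonzero_monomial_edge(1)[OF sg f] nonzero_monomialD(2)[OF f] nonzero_monomialD(2)[OF g w(1)]
        v w(2) by auto
    then have "e (f v) = {v, w}" using \<open>w \<noteq> v\<close> by (auto simp: card_2_iff)
    moreover have "f w \<noteq> g w" using w v \<open>w \<noteq> v\<close> inj_onD[OF nonzero_monomial_inj[OF f]] by auto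
    ultimately show ?thesis using v w by auto
  qed
  ultimately show ?thesis unfolding closed_vertex_set_def by blast
qed

lemma unreachable_closed_vertex_set:
  assumes sg: "simple_graph n q e" and f: "nonzero_monomial n q e f"
    and "u \<in> {1..n}" "\<not> (adj (e ` content n f))\<^sup>*\<^sup>* u n"
  shows "closed_vertex_set n e f {v \<in> {1..n-1}. \<not> (adj (e ` content n f))\<^sup>*\<^sup>* v n}"
proof -
  let ?D = "{v \<in> {1..n-1}. \<not> (adj (e ` content n f))\<^sup>*\<^sup>* v n}"
  have "u \<in> ?D" using assms(3,4) by (cases "u = n") auto
  moreover have "e (f v) \<subseteq> ?D" if v: "v \<in> ?D" for v
  proof -
    define w where "w = other_end (e (f v)) v"
    have v1: "v \<in> {1..n-1}" using v by simp
    have ew: "e (f v) = {v, w}" "w \<noteq> v"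
      using other_end[OF nonzero_monomial_edge(1)[OF sg f v1] nonzero_monomialD(2)[OF f v1]]
      by (simp_all add: w_def)
    have "e (f v) \<in> e ` content n f" unfolding content_def using v1 by (intro imageI)
    then have "adj (e ` content n f) v w" using ew unfolding adj_def by simp
    moreover have "\<not> (adj (e ` content n f))\<^sup>*\<^sup>* v n" using v by simp
    ultimately have "\<not> (adj (e ` content n f))\<^sup>*\<^sup>* w n"
      using converse_rtranclp_into_rtranclp by metis
    moreover have "w \<in> {1..n}" using ew nonzero_monomial_edge(2)[OF sg f v1] by simp
    ultimately have "w \<in> ?D" by (cases "w = n") auto
    then show ?thesis using ew v by auto
  qed
  ultimately show ?thesis unfolding closed_vertex_set_def by blast
qed

lemma cycle_edges_card:
  assumes "3 \<le> length ws" "distinct ws"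
  shows "card ((\<lambda>i. {ws ! i, ws ! ((i + 1) mod length ws)}) ` {..<length ws}) = length ws"
proof -
  define L where "L = length ws"
  have L: "0 < L" using assms(1) L_def by arith
  have nth_eq: "ws ! a = ws ! b \<longleftrightarrow> a = b" if "a < L" "b < L" for a b
    using nth_eq_iff_index_eq[OF assms(2)] that L_def by simp
  have "inj_on (\<lambda>i. {ws ! i, ws ! ((i + 1) mod L)}) {..<L}"
  proof (rule inj_onI, rule ccontr)
    fix i k assume i: "i \<in> {..<L}" and k: "k \<in> {..<L}" and "i \<noteq> k"
      and eq: "{ws ! i, ws ! ((i + 1) mod L)} = {ws ! k, ws ! ((k + 1) mod L)}"
    have "ws ! i \<noteq> ws ! k" using nth_eq i k \<open>i \<noteq> k\<close> by simp
    then have "ws ! i = ws ! ((k + 1) mod L)" "ws ! k = ws ! ((i + 1) mod L)"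
      using eq by (auto simp: doubleton_eq_iff)
    then have "i = (k + 1) mod L" "k = (i + 1) mod L"
      using nth_eq i k mod_less_divisor[OF L] by auto
    then have "i = (i + 2) mod L" by (simp add: mod_Suc_eq)
    moreover have "(i + 2) mod L \<noteq> i"
    proof (cases "i + 2 < L")
      case False
      then have "(i + 2) mod L = (i + 2 - L) mod L" by (simp add: le_mod_geq)
      also have "\<dots> = i + 2 - L" using i assms(1) L_def by (intro mod_less) auto
      finally show ?thesis using False assms(1) L_def by arith
    qed simp
    ultimately show False by simp
  qed
  then show ?thesis using card_image L_def by fastforce
qed

lemma cycle_closed_vertex_set:
  assumes f: "nonzero_monomial n q e f" and "has_cycle (e ` content n f)"
  obtains D where "closed_vertex_set n e f D"
proof -
  obtain ws where ws: "3 \<le> length ws" "distinct ws"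
    "\<forall>i<length ws. {ws ! i, ws ! ((i + 1) mod length ws)} \<in> e ` content n f"
    using assms(2) unfolding has_cycle_def by blast
  define C where "C = (\<lambda>i. {ws ! i, ws ! ((i + 1) mod length ws)}) ` {..<length ws}"
  \<comment> \<open>the \<open>length ws\<close> distinct cycle edges belong to distinct vertices of the cycle, so to all of them\<close>
  define D where "D = {v \<in> {1..n-1}. e (f v) \<in> C}"
  have "0 < length ws" using ws(1) by arith
  then have C_sub: "c \<subseteq> set ws" if "c \<in> C" for c
    using that mod_less_divisor by (auto simp: C_def)
  have "C \<subseteq> (e \<circ> f) ` D"
  proof
    fix c assume c: "c \<in> C"
    then have "c \<in> e ` f ` {1..n-1}" using ws(3) by (auto simp: C_def content_def)
    then obtain v where "v \<in> {1..n-1}" "c = e (f v)" by blast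
    then show "c \<in> (e \<circ> f) ` D" using c by (auto simp: D_def)
  qed
  then have "card C \<le> card D"
    using card_mono[of "(e \<circ> f) ` D" C] card_image_le[of D "e \<circ> f"] by (simp add: D_def)
  then have "card (set ws) \<le> card D"
    using cycle_edges_card[OF ws(1,2)] distinct_card[OF ws(2)] by (simp add: C_def)
  moreover have "D \<subseteq> set ws" using C_sub nonzero_monomialD(2)[OF f] by (auto simp: D_def)
  ultimately have "D = set ws" using card_seteq[of "set ws" D] by simp
  then have "closed_vertex_set n e f D"
    using ws(1) C_sub by (auto simp: closed_vertex_set_def D_def)
  then show thesis by (rule that)
qed

lemma uniquely_occurring_iff_no_closed_vertex_set:
  assumes "simple_graph n q e" "nonzero_monomial n q e f"
  shows "uniquely_occurring n q e f \<longleftrightarrow> (\<nexists>D. closed_vertex_set n e f D)"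
proof
  assume unique: "uniquely_occurring n q e f"
  show "\<nexists>D. closed_vertex_set n e f D"
  proof
    assume "\<exists>D. closed_vertex_set n e f D"
    then obtain D where "closed_vertex_set n e f D" ..
    then obtain g where "nonzero_monomial n q e g" "content n g = content n f" "g \<noteq> f"
      using closed_vertex_set_reorientation[OF assms] by blast
    then show False using unique unfolding uniquely_occurring_def by blast
  qed
next
  assume "\<nexists>D. closed_vertex_set n e f D"
  then show "uniquely_occurring n q e f"
    using assms(2) distinct_monomials_closed_vertex_set[OF assms] unfolding uniquely_occurring_def by blast
qed

lemma has_cycle_iff_closed_vertex_set:
  assumes "simple_graph n q e" "nonzero_monomial n q e f"
  shows "has_cycle (e ` content n f) \<longleftrightarrow> (\<exists>D. closed_vertex_set n e f D)"
proof
  assume "has_cycle (e ` content n f)"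
  then obtain D where "closed_vertex_set n e f D" by (rule cycle_closed_vertex_set[OF assms(2)])
  then show "\<exists>D. closed_vertex_set n e f D" ..
next
  assume "\<exists>D. closed_vertex_set n e f D"
  then obtain D where "closed_vertex_set n e f D" ..
  then show "has_cycle (e ` content n f)" by (rule closed_vertex_set_has_cycle[OF assms])
qed

lemma connected_if_no_closed_vertex_set:
  assumes "simple_graph n q e" "nonzero_monomial n q e f" "n \<ge> 1"
    and "\<nexists>D. closed_vertex_set n e f D"
  shows "connected_on n (e ` content n f)"
proof -
  have "(adj (e ` content n f))\<^sup>*\<^sup>* v n" if "v \<in> {1..n}" for v
    using unreachable_closed_vertex_set[OF assms(1,2) that] assms(4) by blast
  then show ?thesis using connected_on_iff_rooted[of n n] assms(3) by simp
qed

lemma uniquely_occurring_iff_spanning_tree: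
  assumes "n \<ge> 1" "simple_graph n q e" "nonzero_monomial n q e f"
  shows "uniquely_occurring n q e f \<longleftrightarrow> spanning_tree n q e (e ` content n f)"
proof -
  have "e ` content n f \<subseteq> e ` {1..q}" using content_subset[OF assms(3)] by (rule image_mono)
  then show ?thesis
    unfolding spanning_tree_def uniquely_occurring_iff_no_closed_vertex_set[OF assms(2,3)]
      has_cycle_iff_closed_vertex_set[OF assms(2,3)]
    using connected_if_no_closed_vertex_set[OF assms(2,3,1)] by blast
qed

lemma insert_edge_has_cycle:
  assumes sg: "simple_graph n q e" and f: "nonzero_monomial n q e f"
    and conn: "connected_on n (e ` content n f)" and j: "j \<in> {1..q}" "j \<notin> content n f"
  shows "has_cycle (e ` insert j (content n f))"
proof -
  have ej: "card (e j) = 2" "e j \<subseteq> {1..n}" using sg j(1) by (auto simp: simple_graph_def)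
  then obtain a where a: "a \<in> e j" by (metis card.empty ex_in_conv zero_neq_numeral)
  then have "a \<in> {1..n}" using ej by blast
  then have "\<forall>v\<in>{1..n}. (adj (e ` content n f))\<^sup>*\<^sup>* v a"
    using conn connected_on_iff_rooted by blast
  then obtain g where g: "inj_on g ({1..n} - {a})" "g ` ({1..n} - {a}) \<subseteq> content n f"
    "\<forall>v\<in>{1..n} - {a}. v \<in> e (g v)"
    by (rule orientation_towards_root)
  define h where "h v = (if v = a then j else g v)" for v
  have h_into: "h ` {1..n} \<subseteq> insert j (content n f)" using g(2) by (auto simp: h_def)
  then have h_edge: "h v \<in> {1..q}" if "v \<in> {1..n}" for v
    using that content_subset[OF f] j(1) by blast
  have g_in: "g v \<in> content n f" if "v \<in> {1..n}" "v \<noteq> a" for v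
    using g(2) that by blast
  have "inj_on h {1..n}"
  proof (rule inj_onI)
    fix v w assume "v \<in> {1..n}" "w \<in> {1..n}" "h v = h w"
    then show "v = w"
      by (cases "v = a"; cases "w = a") (use g_in j(2) inj_onD[OF g(1)] in \<open>auto simp: h_def\<close>)
  qed
  moreover have "inj_on e (h ` {1..n})"
  proof (rule inj_on_subset)
    show "inj_on e {1..q}" using sg by (simp add: simple_graph_def)
    show "h ` {1..n} \<subseteq> {1..q}" using h_edge by blast
  qed
  ultimately have inj: "inj_on (e \<circ> h) {1..n}" by (rule comp_inj_on)
  have edge: "v \<in> e (h v) \<and> card (e (h v)) = 2 \<and> e (h v) \<subseteq> {1..n}" if "v \<in> {1..n}" for v
  proof -
    have "v \<in> e (h v)" using g(3) a that by (simp add: h_def)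
    moreover have "card (e (h v)) = 2 \<and> e (h v) \<subseteq> {1..n}"
      using h_edge[OF that] sg unfolding simple_graph_def by blast
    ultimately show ?thesis by blast
  qed
  have "has_cycle ((e \<circ> h) ` {1..n})"
  proof (rule injective_edge_choice_has_cycle[OF _ _ inj])
    show "finite {1..n}" "{1..n} \<noteq> {}" using \<open>a \<in> {1..n}\<close> by auto
  qed (use edge in simp)
  moreover have "(e \<circ> h) ` {1..n} \<subseteq> e ` insert j (content n f)"
    using h_into by (auto simp: image_comp[symmetric])
  ultimately show ?thesis using has_cycle_mono by blast
qed

lemma spanning_tree_is_content:
  assumes "n \<ge> 1" and sg: "simple_graph n q e" and "spanning_tree n q e T"
  obtains f where "nonzero_monomial n q e f" "e ` content n f = T"
proof -
  define S where "S = {j \<in> {1..q}. e j \<in> T}"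
  have T: "T \<subseteq> e ` {1..q}" "connected_on n T" "\<not> has_cycle T"
    using assms(3) by (auto simp: spanning_tree_def)
  have eS: "e ` S = T" using T(1) by (auto simp: S_def)
  have "S \<subseteq> {1..q}" by (auto simp: S_def)
  moreover have "\<forall>v\<in>{1..n}. (adj (e ` S))\<^sup>*\<^sup>* v n"
    using T(2) eS connected_on_iff_rooted[of n n] assms(1) by simp
  ultimately obtain f where f: "nonzero_monomial n q e f" "content n f \<subseteq> S"
    by (rule nonzero_monomial_exists)
  have sub: "e ` content n f \<subseteq> T" using f(2) eS by auto
  then have "\<not> has_cycle (e ` content n f)" using T(3) has_cycle_mono by blast
  then have conn: "connected_on n (e ` content n f)"
    using connected_if_no_closed_vertex_set has_cycle_iff_closed_vertex_set sg f(1) assms(1) by blast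
  have "T \<subseteq> e ` content n f"
  proof
    fix t assume "t \<in> T"
    then obtain j where j: "j \<in> S" "e j = t" using eS by blast
    show "t \<in> e ` content n f"
    proof (rule ccontr)
      assume "t \<notin> e ` content n f"
      then have "has_cycle (e ` insert j (content n f))"
        using insert_edge_has_cycle[OF sg f(1) conn] j by (auto simp: S_def)
      moreover have "e ` insert j (content n f) \<subseteq> T" using sub j eS by auto
      ultimately show False using T(3) has_cycle_mono by blast
    qed
  qed
  then show thesis using that f(1) sub by blast
qed

lemma spanning_tree_iff_unique_monomial:
  assumes "n \<ge> 1" "simple_graph n q e" "S \<subseteq> {1..q}" "card S = n - 1"
  shows "spanning_tree n q e (e ` S) \<longleftrightarrow> (\<exists>!f. nonzero_monomial n q e f \<and> content n f = S)"
proof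
  assume tree: "spanning_tree n q e (e ` S)"
  then obtain f where f: "nonzero_monomial n q e f" "content n f \<subseteq> S"
    using nonzero_monomial_exists[OF assms(3)] connected_on_iff_rooted[of n n] assms(1)
    unfolding spanning_tree_def by auto
  moreover have "finite S" using assms(3) finite_subset by blast
  ultimately have "content n f = S" using card_content card_subset_eq assms(4) by metis
  moreover have "uniquely_occurring n q e f"
    using uniquely_occurring_iff_spanning_tree[OF assms(1,2) f(1)] tree \<open>content n f = S\<close> by simp
  ultimately show "\<exists>!f. nonzero_monomial n q e f \<and> content n f = S"
    unfolding uniquely_occurring_def by blast
next
  assume "\<exists>!f. nonzero_monomial n q e f \<and> content n f = S"
  then obtain f where "uniquely_occurring n q e f" "content n f = S"
    unfolding uniquely_occurring_def by blast
  then show "spanning_tree n q e (e ` S)"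
    using uniquely_occurring_iff_spanning_tree[OF assms(1,2)] uniquely_occurring_def by blast
qed

lemma bij_betw_uniquely_occurring_contents_spanning_trees:
  assumes "n \<ge> 1" "simple_graph n q e"
  shows "bij_betw (\<lambda>S. e ` S) {content n f | f. uniquely_occurring n q e f}
           {T. spanning_tree n q e T}"
  unfolding bij_betw_def
proof
  have "{content n f | f. uniquely_occurring n q e f} \<subseteq> Pow {1..q}"
    using content_subset unfolding uniquely_occurring_def by blast
  moreover have "inj_on e {1..q}" using assms(2) by (simp add: simple_graph_def)
  then have "inj_on (\<lambda>S. e ` S) (Pow {1..q})" by (simp add: inj_on_def inj_on_image_eq_iff)
  ultimately show "inj_on (\<lambda>S. e ` S) {content n f | f. uniquely_occurring n q e f}"
    by (rule inj_on_subset[rotated])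
  show "(\<lambda>S. e ` S) ` {content n f | f. uniquely_occurring n q e f} = {T. spanning_tree n q e T}"
  proof (intro equalityI subsetI)
    fix T assume "T \<in> (\<lambda>S. e ` S) ` {content n f | f. uniquely_occurring n q e f}"
    then obtain f where "uniquely_occurring n q e f" "T = e ` content n f" by blast
    then show "T \<in> {T. spanning_tree n q e T}"
      using uniquely_occurring_iff_spanning_tree[OF assms] uniquely_occurring_def by blast
  next
    fix T assume "T \<in> {T. spanning_tree n q e T}"
    then have tree: "spanning_tree n q e T" by simp
    then obtain f where f: "nonzero_monomial n q e f" "e ` content n f = T"
      using spanning_tree_is_content[OF assms] by blast
    then have "uniquely_occurring n q e f"
      using uniquely_occurring_iff_spanning_tree[OF assms f(1)] tree by simp
    then show "T \<in> (\<lambda>S. e ` S) ` {content n f | f. uniquely_occurring n q e f}" using f(2) by blast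
  qed
qed

theorem theorem2p2:
  fixes n q :: nat and e :: "nat \<Rightarrow> nat set"
  assumes "n \<ge> 1"
    and "simple_graph n q e"
    and "connected_on n (e ` {1..q})"
  shows "(\<forall>S. S \<subseteq> {1..q} \<and> card S = n - 1 \<longrightarrow>
            (spanning_tree n q e (e ` S) \<longleftrightarrow>
             (\<exists>!f. nonzero_monomial n q e f \<and> content n f = S)))
       \<and> bij_betw (\<lambda>S. e ` S) {content n f | f. uniquely_occurring n q e f}
                 {T. spanning_tree n q e T}"
proof (intro conjI allI impI)
  fix S assume "S \<subseteq> {1..q} \<and> card S = n - 1"
  then show "spanning_tree n q e (e ` S) \<longleftrightarrow> (\<exists>!f. nonzero_monomial n q e f \<and> content n f = S)"
    by (elim conjE) (rule spanning_tree_iff_unique_monomial[OF assms(1,2)])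
qed (rule bij_betw_uniquely_occurring_contents_spanning_trees[OF assms(1,2)])

end
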